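(* Let $f_A,f_R,F,d_a,d_e$ be as in the context, with $\chi=1$. There exists at most one radius $\bar R\in(0,\frac{d_e}{2}]$ such that the ring state $\delta_{(\bar R,0)}$ of radius $\bar R$ is a nontrivial equilibrium state of the mean-field equation $\partial_t\rho+\nabla\cdot[\rho\,(F(\cdot,T)\ast\rho)]=0$. If moreover $$\int_0^{\pi}(f_A+f_R)\Big(\tfrac{d_e}{2}\sqrt{(1-\cos\phi)^2+\sin^2\phi}\Big)(1-\cos\phi)\,d\phi<0,$$ then there exists a unique $\bar R\in(\frac{d_a}{2},\frac{d_e}{2}]$ such that $\delta_{(\bar R,0)}$ is a nontrivial equilibrium state.
   Context: Let $f_R, f_A:[0,\infty)\to\mathbb{R}$ be smooth integrable functions with $f_R\ge 0$ and $f_A\le 0$, such that there is $d_a>0$ with $(f_A+f_R)(\rho)\le 0$ for $\rho>d_a$ and $(f_A+f_R)(\rho)>0$ for $0\le\rho<d_a$. For $\chi\in[0,1]$, $s=(0,1)$, $l=(1,0)$, let $T=\chi\, s\otimes s + l\otimes l$ and $F(d,T) = f_A(|d|)\,T d + f_R(|d|)\,d$ for $d\in\mathbb{R}^2$; assume $F$ is $C^1$ with bounded total derivatives. Assume there is $d_e>d_a$ such that $\chi f_A+f_R$ is strictly decreasing on $[0,d_e]$ for all $\chi\in[0,1]$. A Borel probability measure $\mu$ on $\mathbb{R}^2$ is an equilibrium state if $K(x):=\int_{\mathbb{R}^2}F(x-y,T)\,d\mu(y)$ satisfies $K\in L^1_{loc}(d\mu)$ and $K=0$ on $\mathrm{supp}(\mu)$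 $\mu$-a.e. For $R>0$ the ring state $\delta_{(R,0)}$ is the uniform probability measure on the circle $\{(R\cos\phi,R\sin\phi)\}$. *)

theory Defs
  imports "HOL-Probability.Probability"
begin

definition smooth_on_real :: "real set \<Rightarrow> (real \<Rightarrow> real) \<Rightarrow> bool" where
  "smooth_on_real S f \<longleftrightarrow>
     (\<exists>D :: nat \<Rightarrow> real \<Rightarrow> real. D 0 = f \<and>
        (\<forall>n. \<forall>x\<in>S. (D n has_real_derivative D (Suc n) x) (at x within S)))"

text \<open>T = chi s(x)s + l(x)l with s = (0,1), l = (1,0); applied to d = (d1,d2) gives (d1, chi d2).\<close>
definition Tmat :: "real \<Rightarrow> real \<times> real \<Rightarrow> real \<times> real" where
  "Tmat chi d = (fst d, chi * snd d)"

definition Fint :: "(real \<Rightarrow> real) \<Rightarrow> (real \<Rightarrow> real) \<Rightarrow> real \<Rightarrow> real \<times> real \<Rightarrow> real \<times> real" where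
  "Fint fA fR chi d = fA (norm d) *\<^sub>R Tmat chi d + fR (norm d) *\<^sub>R d"

definition msupp :: "(real \<times> real) measure \<Rightarrow> (real \<times> real) set" where
  "msupp \<mu> = {x. \<forall>e>0. emeasure \<mu> (ball x e) > 0}"

definition Kfield :: "(real \<times> real \<Rightarrow> real \<times> real) \<Rightarrow> (real \<times> real) measure \<Rightarrow> real \<times> real \<Rightarrow> real \<times> real" where
  "Kfield G \<mu> x = (\<integral>y. G (x - y) \<partial>\<mu>)"

text \<open>Equilibrium state for the interaction kernel G (= F(., T)).\<close>
definition equilibrium_state :: "(real \<times> real \<Rightarrow> real \<times> real) \<Rightarrow> (real \<times> real) measure \<Rightarrow> bool" where
  "equilibrium_state G \<mu> \<longleftrightarrow>
     prob_space \<mu> \<and> sets \<mu> = sets borel \<and>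
     (\<forall>x. integrable \<mu> (\<lambda>y. G (x - y))) \<and>
     (\<forall>C. compact C \<longrightarrow> set_integrable \<mu> C (Kfield G \<mu>)) \<and>
     (AE x in \<mu>. x \<in> msupp \<mu> \<longrightarrow> Kfield G \<mu> x = 0)"

definition ring_state :: "real \<Rightarrow> (real \<times> real) measure" where
  "ring_state R = distr (uniform_measure lborel {0..2*pi}) borel (\<lambda>\<phi>. (R * cos \<phi>, R * sin \<phi>))"

end

theory Submission
  imports Defs
begin

text \<open>For \<open>\<chi> = 1\<close> the kernel is radial, \<open>F(d) = g(|d|) d\<close> with \<open>g = f\<^sub>A + f\<^sub>R\<close>.
  On the ring of radius \<open>R\<close> the distance between the points at angles \<open>\<theta>\<close> and \<open>\<theta> + \<phi>\<close> is
  \<open>R \<cdot> chord \<phi>\<close>, so by rotation invariance the field at a point of the ring is a fixed integral over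
  \<open>\<phi>\<close>; the reflection \<open>\<phi> \<mapsto> 2\<pi> - \<phi>\<close> kills its tangential part, and its normal part is
  \<open>R/\<pi>\<close> times the balance \<open>J(R) = \<integral>\<^sub>0\<^sup>\<pi> g(R chord \<phi>) (1 - cos \<phi>) d\<phi>\<close>. Hence the ring state is an
  equilibrium iff \<open>J(R) = 0\<close>. For \<open>2R \<le> d\<^sub>e\<close> every chord length lies in \<open>[0, d\<^sub>e]\<close>, where \<open>g\<close>
  strictly decreases, so \<open>J\<close> strictly decreases in \<open>R\<close> and has at most one zero. Since \<open>g > 0\<close>
  on \<open>[0, d\<^sub>a)\<close> we get \<open>J(d\<^sub>a/2) > 0\<close>, and the extra hypothesis says \<open>J(d\<^sub>e/2) < 0\<close>; the
  intermediate value theorem gives the zero.\<close>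

lemma integral_shift_periodic:
  fixes f :: "real \<Rightarrow> 'a::banach"
  assumes cont: "continuous_on UNIV f" and per: "\<And>x. f (x + T) = f x"
    and c: "0 \<le> c" "c \<le> T"
  shows "integral {0..T} (\<lambda>x. f (x + c)) = integral {0..T} f"
proof -
  have int: "f integrable_on {a..b}" for a b
    using cont by (meson continuous_on_subset integrable_continuous_real subset_UNIV)
  have "integral {0..T} (\<lambda>x. f (x + c)) = integral {c..T + c} f"
    using integral_shift_real_ivl[of c c "T + c" f] by simp
  also have "\<dots> = integral {c..T} f + integral {T..T + c} f"
    using Henstock_Kurzweil_Integration.integral_combine[of c T "T + c" f] int c by simp
  also have "integral {T..T + c} f = integral {0..c} f"
    using integral_shift_real_ivl[of T T "T + c" f] by (simp add: per)
  also have "integral {c..T} f + integral {0..c} f = integral {0..T} f"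
    using Henstock_Kurzweil_Integration.integral_combine[of 0 c T f] int c by (simp add: add.commute)
  finally show ?thesis .
qed

lemma integral_reflect_split:
  fixes f :: "real \<Rightarrow> 'a::banach"
  assumes cont: "continuous_on UNIV f" and a: "0 \<le> a"
  shows "integral {0..2*a} f = integral {0..a} f + integral {0..a} (\<lambda>s. f (2*a - s))"
proof -
  have int: "f integrable_on {u..w}" for u w
    using cont by (meson continuous_on_subset integrable_continuous_real subset_UNIV)
  have "integral {0..2*a} f = integral {0..a} f + integral {a..2*a} f"
    using Henstock_Kurzweil_Integration.integral_combine[of 0 a "2*a" f] int a by simp
  also have "integral {a..2*a} f = integral {-(2*a)..-a} (\<lambda>x. f (-x))"
    by simp
  also have "\<dots> = integral {0..a} (\<lambda>s. f (2*a - s))"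
    using integral_shift_real_ivl[of 0 "2*a" a "\<lambda>s. f (2*a - s)"] by simp
  finally show ?thesis .
qed

abbreviation uniform_angle :: "real measure" where
  "uniform_angle \<equiv> uniform_measure lborel {0..2*pi}"

lemma emeasure_lborel_angles: "emeasure lborel {0..2*pi} = ennreal (2*pi)"
  using emeasure_lborel_Icc[of 0 "2*pi"] by simp

lemma uniform_angle_density:
  "uniform_angle = density lborel (\<lambda>x. ennreal (indicator {0..2*pi} x / (2*pi)))"
proof -
  have "indicator {0..2*pi} x / emeasure lborel {0..2*pi} = ennreal (indicator {0..2*pi} x / (2*pi))"
    for x :: real
    unfolding emeasure_lborel_angles
    using divide_ennreal[of 1 "2*pi"] by (cases "x \<in> {0..2*pi}") simp_all
  then show ?thesis unfolding uniform_measure_def by (simp only:)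
qed

lemma prob_space_uniform_angle: "prob_space uniform_angle"
  by (rule prob_space_uniform_measure) (simp_all add: emeasure_lborel_angles)

lemma measurable_circle_param:
  "(\<lambda>\<phi>. (R * cos \<phi>, R * sin \<phi>)) \<in> measurable uniform_angle borel"
proof -
  have "(\<lambda>\<phi>::real. (R * cos \<phi>, R * sin \<phi>)) \<in> borel_measurable borel"
    by (intro borel_measurable_continuous_onI continuous_intros)
  moreover have "measurable uniform_angle (borel::(real\<times>real) measure) = measurable borel borel"
    by (rule measurable_cong_sets) simp_all
  ultimately show ?thesis by simp
qed

lemma prob_space_ring_state: "prob_space (ring_state R)"
  unfolding ring_state_def
  by (rule prob_space.prob_space_distr[OF prob_space_uniform_angle measurable_circle_param])

lemma sets_ring_state: "sets (ring_state R) = sets borel"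
  unfolding ring_state_def by simp

lemma
  fixes f :: "real \<times> real \<Rightarrow> 'b::euclidean_space"
  assumes cont: "continuous_on UNIV f"
  shows integrable_ring_state: "integrable (ring_state R) f"
    and integral_ring_state: "integral\<^sup>L (ring_state R) f
           = (1/(2*pi)) *\<^sub>R integral {0..2*pi} (\<lambda>\<phi>. f (R * cos \<phi>, R * sin \<phi>))"
proof -
  let ?h = "\<lambda>\<phi>. f (R * cos \<phi>, R * sin \<phi>)"
  let ?A = "{0..2*pi::real}"
  have fm: "f \<in> borel_measurable borel" using cont by (rule borel_measurable_continuous_onI)
  have ch: "continuous_on UNIV ?h"
    by (rule continuous_on_compose2[OF cont]) (auto intro!: continuous_intros)
  then have hm: "?h \<in> borel_measurable lborel"
    by (simp add: borel_measurable_continuous_onI)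
  have ic: "integrable lborel (\<lambda>x. indicator ?A x *\<^sub>R ?h x)"
    by (rule borel_integrable_compact) (auto intro: continuous_on_subset[OF ch])
  have scale: "(\<lambda>x. (indicator ?A x / (2*pi)) *\<^sub>R ?h x) = (\<lambda>x. (1/(2*pi)) *\<^sub>R (indicator ?A x *\<^sub>R ?h x))"
    by (auto simp: indicator_def)
  have "integrable uniform_angle ?h"
    unfolding uniform_angle_density
    by (subst integrable_density[OF hm]) (simp_all add: scale ic del: scaleR_scaleR)
  then show "integrable (ring_state R) f"
    unfolding ring_state_def by (subst integrable_distr_eq[OF measurable_circle_param fm])
  have "integral\<^sup>L (ring_state R) f = integral\<^sup>L uniform_angle ?h"
    unfolding ring_state_def by (rule integral_distr[OF measurable_circle_param fm])
  also have "\<dots> = (1/(2*pi)) *\<^sub>R integral\<^sup>L lborel (\<lambda>x. indicator ?A x *\<^sub>R ?h x)"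
    unfolding uniform_angle_density
    by (subst integral_density[OF hm]) (simp_all add: scale del: scaleR_scaleR)
  also have "integral\<^sup>L lborel (\<lambda>x. indicator ?A x *\<^sub>R ?h x) = integral ?A ?h"
    using set_borel_integral_eq_integral(2)[of ?A ?h] ic
    unfolding set_integrable_def set_lebesgue_integral_def by simp
  finally show "integral\<^sup>L (ring_state R) f = (1/(2*pi)) *\<^sub>R integral ?A ?h" .
qed

lemma ring_state_support:
  assumes th: "0 \<le> \<theta>" "\<theta> \<le> 2*pi"
  shows "(R * cos \<theta>, R * sin \<theta>) \<in> msupp (ring_state R)"
  unfolding msupp_def
proof (intro CollectI allI impI)
  fix e :: real assume e: "e > 0"
  define p where "p = (\<lambda>\<phi>::real. (R * cos \<phi>, R * sin \<phi>))"
  define B where "B = p -` ball (p \<theta>) e"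
  have "open B" unfolding B_def p_def
    by (rule continuous_open_vimage) (auto intro!: continuous_intros)
  moreover have "\<theta> \<in> B" unfolding B_def using e by simp
  ultimately obtain \<delta> where \<delta>: "\<delta> > 0" "ball \<theta> \<delta> \<subseteq> B" using open_contains_ball by blast
  define \<epsilon> where "\<epsilon> = min (\<delta>/2) pi"
  define a where "a = (if \<theta> \<le> pi then \<theta> else \<theta> - \<epsilon>)"
  have \<epsilon>: "\<epsilon> > 0" "\<epsilon> < \<delta>" "\<epsilon> \<le> pi" unfolding \<epsilon>_def using \<delta> pi_gt_zero by auto
  have sub: "{a..a+\<epsilon>} \<subseteq> {0..2*pi} \<inter> B"
  proof
    fix y assume y: "y \<in> {a..a+\<epsilon>}"
    then have "y \<in> ball \<theta> \<delta>" using \<epsilon> unfolding a_def by (auto simp: dist_real_def split: if_splits)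
    moreover have "0 \<le> y" "y \<le> 2*pi" using y th \<epsilon> unfolding a_def by (auto split: if_splits)
    ultimately show "y \<in> {0..2*pi} \<inter> B" using \<delta> by auto
  qed
  have Bs: "B \<in> sets lborel" using \<open>open B\<close> by simp
  have "0 < ennreal \<epsilon>" using \<epsilon> by simp
  also have "ennreal \<epsilon> = emeasure lborel {a..a+\<epsilon>}" using \<epsilon> by simp
  also have "\<dots> \<le> emeasure lborel ({0..2*pi} \<inter> B)"
    using sub Bs by (intro emeasure_mono) auto
  finally have pos: "0 < emeasure lborel ({0..2*pi} \<inter> B)" .
  have "emeasure (ring_state R) (ball (p \<theta>) e) = emeasure uniform_angle B"
    unfolding ring_state_def p_def[symmetric] B_def
    by (subst emeasure_distr) (simp_all add: p_def measurable_circle_param)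
  also have "\<dots> = emeasure lborel ({0..2*pi} \<inter> B) / ennreal (2*pi)"
    using Bs by (simp add: emeasure_uniform_measure emeasure_lborel_angles)
  finally show "emeasure (ring_state R) (ball (R * cos \<theta>, R * sin \<theta>) e) > 0"
    using pos unfolding p_def by (simp add: ennreal_zero_less_divide)
qed

lemma set_integrable_continuous_compact:
  fixes K :: "'a::metric_space \<Rightarrow> 'b::{banach,second_countable_topology}"
  assumes "prob_space M" and sets: "sets M = sets borel"
    and cont: "continuous_on UNIV K" and C: "compact C"
  shows "set_integrable M C K"
proof -
  interpret prob_space M by fact
  obtain B where B: "\<forall>y\<in>K ` C. norm y \<le> B"
    using compact_imp_bounded[OF compact_continuous_image[OF continuous_on_subset[OF cont] C]]
    unfolding bounded_iff by auto
  have "(\<lambda>x. indicator C x *\<^sub>R K x) \<in> borel_measurable borel"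
    using C cont by (intro borel_measurable_scaleR borel_measurable_indicator
        borel_measurable_continuous_onI) (simp_all add: compact_imp_closed)
  then have "(\<lambda>x. indicator C x *\<^sub>R K x) \<in> borel_measurable M"
    by (simp add: measurable_cong_sets[OF sets refl])
  moreover have "norm (indicator C x *\<^sub>R K x) \<le> max B 0" for x
    using B by (cases "x \<in> C") auto
  ultimately show ?thesis
    unfolding set_integrable_def by (intro integrable_const_bound[OF AE_I2])
qed

lemma continuous_on_Kfield_ring_state:
  fixes G :: "real \<times> real \<Rightarrow> real \<times> real"
  assumes cont: "continuous_on UNIV G"
  shows "continuous_on UNIV (Kfield G (ring_state R))"
proof -
  have "continuous_on (UNIV \<times> cbox 0 (2*pi))
          (\<lambda>z. G (fst z - (R * cos (snd z), R * sin (snd z))))"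
    by (rule continuous_on_compose2[OF cont]) (auto intro!: continuous_intros)
  then have "continuous_on UNIV
      (\<lambda>x. integral (cbox 0 (2*pi)) (\<lambda>\<phi>. G (x - (R * cos \<phi>, R * sin \<phi>))))"
    by (intro integral_continuous_on_param) (simp add: case_prod_unfold)
  moreover have "Kfield G (ring_state R) x
      = (1/(2*pi)) *\<^sub>R integral (cbox 0 (2*pi)) (\<lambda>\<phi>. G (x - (R * cos \<phi>, R * sin \<phi>)))" for x
    unfolding Kfield_def
    by (subst integral_ring_state) (auto intro!: continuous_on_compose2[OF cont] continuous_intros)
  ultimately show ?thesis by (simp add: continuous_intros)
qed

lemma equilibrium_ring_stateI:
  assumes cont: "continuous_on UNIV G"
    and zero: "\<And>\<theta>. \<theta> \<in> {0..2*pi} \<Longrightarrow> Kfield G (ring_state R) (R * cos \<theta>, R * sin \<theta>) = 0"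
  shows "equilibrium_state G (ring_state R)"
proof -
  define K where "K = Kfield G (ring_state R)"
  have Kc: "continuous_on UNIV K"
    unfolding K_def by (rule continuous_on_Kfield_ring_state[OF cont])
  have "{x \<in> space borel. K x = 0} = K -` {0} \<inter> space borel" by auto
  also have "\<dots> \<in> sets borel"
    using borel_measurable_continuous_onI[OF Kc] by (rule measurable_sets) simp
  finally have "{x \<in> space borel. K x = 0} \<in> sets borel" .
  moreover have "AE \<phi> in uniform_angle. K (R * cos \<phi>, R * sin \<phi>) = 0"
    using zero unfolding K_def by (intro AE_uniform_measureI AE_I2) auto
  ultimately have "AE x in ring_state R. K x = 0"
    unfolding ring_state_def by (subst AE_distr_iff[OF measurable_circle_param])
  moreover have "integrable (ring_state R) (\<lambda>y. G (x - y))" for x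
    by (rule integrable_ring_state) (auto intro!: continuous_on_compose2[OF cont] continuous_intros)
  moreover have "set_integrable (ring_state R) C K" if "compact C" for C
    using prob_space_ring_state sets_ring_state Kc that by (rule set_integrable_continuous_compact)
  ultimately show ?thesis
    unfolding equilibrium_state_def K_def[symmetric]
    using prob_space_ring_state sets_ring_state by (intro conjI allI impI) (auto elim: eventually_mono)
qed

lemma equilibrium_ring_stateD:
  assumes "equilibrium_state G (ring_state R)"
  obtains \<theta> where "\<theta> \<in> {0..2*pi}" "Kfield G (ring_state R) (R * cos \<theta>, R * sin \<theta>) = 0"
proof -
  have "AE x in ring_state R. x \<in> msupp (ring_state R) \<longrightarrow> Kfield G (ring_state R) x = 0"
    using assms unfolding equilibrium_state_def by blast
  then have "AE \<phi> in uniform_angle. (R * cos \<phi>, R * sin \<phi>) \<in> msupp (ring_state R)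
      \<longrightarrow> Kfield G (ring_state R) (R * cos \<phi>, R * sin \<phi>) = 0"
    unfolding ring_state_def by (rule AE_distrD[OF measurable_circle_param])
  moreover have "AE \<phi> in uniform_angle. \<phi> \<in> {0..2*pi}"
    by (rule AE_uniform_measureI) auto
  ultimately have zero_AE: "AE \<phi> in uniform_angle.
      Kfield G (ring_state R) (R * cos \<phi>, R * sin \<phi>) = 0 \<and> \<phi> \<in> {0..2*pi}"
    by eventually_elim (simp add: ring_state_support)
  show ?thesis
  proof (rule ccontr)
    assume "\<not> thesis"
    then have "AE \<phi> in uniform_angle. \<not> (Kfield G (ring_state R) (R * cos \<phi>, R * sin \<phi>) = 0
                                   \<and> \<phi> \<in> {0..2*pi})"
      using that by (intro AE_I2) blast
    with zero_AE show False
      by (rule prob_space.AE_contr[OF prob_space_uniform_angle])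
  qed
qed

definition chord :: "real \<Rightarrow> real" where
  "chord t = sqrt ((1 - cos t)\<^sup>2 + (sin t)\<^sup>2)"

lemma chord_eq: "chord t = sqrt (2 - 2 * cos t)"
proof -
  have "(1 - cos t)\<^sup>2 + (sin t)\<^sup>2 = 2 - 2 * cos t"
    using sin_cos_squared_add[of t] by (simp add: power2_eq_square algebra_simps)
  then show ?thesis unfolding chord_def by simp
qed

lemma chord_nonneg: "0 \<le> chord t"
  by (simp add: chord_def)

lemma continuous_on_chord: "continuous_on A chord"
  unfolding chord_def by (intro continuous_intros)

lemma chord_pos: "0 < t \<Longrightarrow> t < pi \<Longrightarrow> 0 < chord t"
  using cos_monotone_0_pi[of 0 t] by (simp add: chord_eq)

lemma chord_less_2: "0 < t \<Longrightarrow> t < pi \<Longrightarrow> chord t < 2"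
  using cos_monotone_0_pi[of t pi] real_sqrt_less_mono[of "2 - 2 * cos t" 4]
  by (simp add: chord_eq)

lemma sin_times_sin: "sin x * sin x = 1 - cos x * cos (x::real)"
  using sin_cos_squared_add[of x] by (simp add: power2_eq_square)

lemma norm_diff_circle:
  assumes "R \<ge> 0"
  shows "norm ((R * cos \<theta>, R * sin \<theta>) - (R * cos \<phi>, R * sin \<phi>)) = R * chord (\<phi> - \<theta>)"
proof -
  have "(R * cos \<theta> - R * cos \<phi>)\<^sup>2 + (R * sin \<theta> - R * sin \<phi>)\<^sup>2 = R\<^sup>2 * (2 - 2 * cos (\<phi> - \<theta>))"
    by (simp add: cos_diff power2_eq_square algebra_simps sin_times_sin)
  then show ?thesis
    using assms by (simp add: norm_Pair chord_eq real_sqrt_mult)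
qed

lemma diff_circle:
  "(R * cos \<theta>, R * sin \<theta>) - (R * cos \<phi>, R * sin \<phi>) =
   R *\<^sub>R ((1 - cos (\<phi> - \<theta>)) *\<^sub>R (cos \<theta>, sin \<theta>) + sin (\<phi> - \<theta>) *\<^sub>R (sin \<theta>, - cos \<theta>))"
  by (simp add: cos_diff sin_diff algebra_simps sin_times_sin)

definition ring_balance :: "(real \<Rightarrow> real) \<Rightarrow> real \<Rightarrow> real" where
  "ring_balance g R = integral {0..pi} (\<lambda>\<phi>. g (R * chord \<phi>) * (1 - cos \<phi>))"

lemma continuous_on_comp_chord:
  assumes "continuous_on {0..} g" "R \<ge> 0"
  shows "continuous_on A (\<lambda>\<phi>. g (R * chord \<phi>))"
  using assms by (intro continuous_on_compose2[OF assms(1)] continuous_intros continuous_on_chord)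
    (auto simp: chord_nonneg)

lemma has_integral_ring_balance:
  assumes g: "continuous_on {0..} g" and R: "R \<ge> 0"
  shows "((\<lambda>t. g (R * chord t) * (1 - cos t)) has_integral 2 * ring_balance g R) {0..2*pi}"
proof -
  define m where "m = (\<lambda>t. g (R * chord t) * (1 - cos t))"
  have mc: "continuous_on UNIV m"
    unfolding m_def by (intro continuous_intros continuous_on_comp_chord[OF g R])
  have "(\<lambda>s. m (2*pi - s)) = m"
    unfolding m_def chord_def by (simp add: cos_diff sin_diff)
  then have "integral {0..2*pi} m = 2 * ring_balance g R"
    using integral_reflect_split[OF mc, of pi] by (simp add: m_def ring_balance_def)
  then show ?thesis
    using integrable_continuous_real[OF continuous_on_subset[OF mc]]
    unfolding m_def by (metis has_integral_integral top_greatest)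
qed

lemma has_integral_chord_sin:
  assumes g: "continuous_on {0..} g" and R: "R \<ge> 0"
  shows "((\<lambda>t. g (R * chord t) * sin t) has_integral 0) {0..2*pi}"
proof -
  define n where "n = (\<lambda>t. g (R * chord t) * sin t)"
  have nc: "continuous_on UNIV n"
    unfolding n_def by (intro continuous_intros continuous_on_comp_chord[OF g R])
  have "(\<lambda>s. n (2*pi - s)) = (\<lambda>s. - n s)"
    unfolding n_def chord_def by (simp add: cos_diff sin_diff)
  then have "integral {0..2*pi} n = 0"
    using integral_reflect_split[OF nc, of pi] by simp
  then show ?thesis
    using integrable_continuous_real[OF continuous_on_subset[OF nc]]
    unfolding n_def by (metis has_integral_integral top_greatest)
qed

lemma Kfield_radial_ring_state:
  fixes g :: "real \<Rightarrow> real"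
  assumes g: "continuous_on {0..} g" and R: "R \<ge> 0" and \<theta>: "0 \<le> \<theta>" "\<theta> \<le> 2*pi"
  shows "Kfield (\<lambda>d. g (norm d) *\<^sub>R d) (ring_state R) (R * cos \<theta>, R * sin \<theta>)
         = (R * ring_balance g R / pi) *\<^sub>R (cos \<theta>, sin \<theta>)"
proof -
  define G where "G = (\<lambda>d::real\<times>real. g (norm d) *\<^sub>R d)"
  define x where "x = (R * cos \<theta>, R * sin \<theta>)"
  define h where "h = (\<lambda>\<phi>. G (x - (R * cos \<phi>, R * sin \<phi>)))"
  define u where "u = (cos \<theta>, sin \<theta>)"
  define v where "v = (sin \<theta>, - cos \<theta>)"
  have Gc: "continuous_on UNIV G"
    unfolding G_def by (intro continuous_intros continuous_on_compose2[OF g]) auto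
  have hc: "continuous_on UNIV h"
    unfolding h_def by (intro continuous_on_compose2[OF Gc] continuous_intros) auto
  have h_rotated: "h (\<phi> + \<theta>) = R *\<^sub>R ((g (R * chord \<phi>) * (1 - cos \<phi>)) *\<^sub>R u
                                      + (g (R * chord \<phi>) * sin \<phi>) *\<^sub>R v)" for \<phi>
  proof -
    have "h (\<phi> + \<theta>) = g (R * chord \<phi>) *\<^sub>R (x - (R * cos (\<phi> + \<theta>), R * sin (\<phi> + \<theta>)))"
      unfolding h_def G_def x_def norm_diff_circle[OF R] by simp
    then show ?thesis
      unfolding x_def diff_circle u_def v_def by (simp add: algebra_simps)
  qed
  have "((\<lambda>\<phi>. h (\<phi> + \<theta>)) has_integral R *\<^sub>R ((2 * ring_balance g R) *\<^sub>R u + 0 *\<^sub>R v)) {0..2*pi}"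
    unfolding h_rotated
    by (intro has_integral_cmul has_integral_add has_integral_scaleR_left
        has_integral_ring_balance[OF g R] has_integral_chord_sin[OF g R])
  moreover have "h (\<phi> + 2*pi) = h \<phi>" for \<phi>
    unfolding h_def by (simp add: cos_add sin_add)
  ultimately have "integral {0..2*pi} h = (2 * R * ring_balance g R) *\<^sub>R u"
    using integral_shift_periodic[OF hc _ \<theta>] by (simp add: integral_unique ac_simps del: integral_cmul)
  moreover have "Kfield G (ring_state R) x = (1/(2*pi)) *\<^sub>R integral {0..2*pi} h"
    unfolding Kfield_def h_def
    by (rule integral_ring_state) (auto intro!: continuous_on_compose2[OF Gc] continuous_intros)
  ultimately show ?thesis unfolding G_def x_def u_def by simp
qed

lemma equilibrium_radial_ring_state_iff:
  fixes g :: "real \<Rightarrow> real"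
  assumes g: "continuous_on {0..} g" and R: "R > 0"
  shows "equilibrium_state (\<lambda>d. g (norm d) *\<^sub>R d) (ring_state R) \<longleftrightarrow> ring_balance g R = 0"
proof
  have cont: "continuous_on UNIV (\<lambda>d::real\<times>real. g (norm d) *\<^sub>R d)"
    by (intro continuous_intros continuous_on_compose2[OF g]) auto
  have unit: "(cos \<theta>, sin \<theta>) \<noteq> (0::real\<times>real)" for \<theta>
  proof
    assume "(cos \<theta>, sin \<theta>) = (0::real\<times>real)"
    then have "cos \<theta> = 0" "sin \<theta> = 0" by (simp_all add: zero_prod_def)
    then show False using sin_cos_squared_add[of \<theta>] by simp
  qed
  {
    assume "equilibrium_state (\<lambda>d. g (norm d) *\<^sub>R d) (ring_state R)"
    then obtain \<theta> where "\<theta> \<in> {0..2*pi}"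
      "Kfield (\<lambda>d. g (norm d) *\<^sub>R d) (ring_state R) (R * cos \<theta>, R * sin \<theta>) = 0"
      by (rule equilibrium_ring_stateD)
    then have "(R * ring_balance g R / pi) *\<^sub>R (cos \<theta>, sin \<theta>) = 0"
      using Kfield_radial_ring_state[OF g] R by simp
    then show "ring_balance g R = 0"
      using R unit[of \<theta>] by (simp only: scaleR_eq_0_iff) simp
  }
  assume "ring_balance g R = 0"
  then show "equilibrium_state (\<lambda>d. g (norm d) *\<^sub>R d) (ring_state R)"
    using R by (intro equilibrium_ring_stateI[OF cont]) (simp add: Kfield_radial_ring_state[OF g] zero_prod_def)
qed

lemma continuous_on_ring_balance:
  assumes g: "continuous_on {0..} g" and "0 \<le> a"
  shows "continuous_on {a..b} (ring_balance g)"
proof -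
  have "continuous_on ({a..b} \<times> cbox 0 pi) (\<lambda>z. g (fst z * chord (snd z)) * (1 - cos (snd z)))"
    using \<open>0 \<le> a\<close>
    by (intro continuous_intros continuous_on_compose2[OF g] continuous_on_compose2[OF continuous_on_chord])
      (auto simp: chord_nonneg)
  then have "continuous_on {a..b} (\<lambda>R. integral (cbox 0 pi) (\<lambda>\<phi>. g (R * chord \<phi>) * (1 - cos \<phi>)))"
    by (intro integral_continuous_on_param) (simp add: case_prod_unfold)
  then show ?thesis unfolding ring_balance_def by simp
qed

lemma ring_balance_less:
  assumes g1: "continuous_on {0..} g1" and g2: "continuous_on {0..} g2"
    and R: "R1 \<ge> 0" "R2 \<ge> 0"
    and less: "\<And>t. 0 < t \<Longrightarrow> t < 2 \<Longrightarrow> g1 (R1 * t) < g2 (R2 * t)"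
  shows "ring_balance g1 R1 < ring_balance g2 R2"
  unfolding ring_balance_def
proof (rule integral_less_real)
  show "continuous_on {0..pi} (\<lambda>\<phi>. g1 (R1 * chord \<phi>) * (1 - cos \<phi>))"
    and "continuous_on {0..pi} (\<lambda>\<phi>. g2 (R2 * chord \<phi>) * (1 - cos \<phi>))"
    by (intro continuous_intros continuous_on_comp_chord g1 g2 R)+
  show "{0<..<pi} \<noteq> {}" using pi_gt_zero by (simp add: greaterThanLessThan_empty_iff not_le)
  fix \<phi> assume "\<phi> \<in> {0<..<pi}"
  then have "0 < chord \<phi>" "chord \<phi> < 2" "cos \<phi> < 1"
    using chord_pos chord_less_2 cos_monotone_0_pi[of 0 \<phi>] by auto
  then show "g1 (R1 * chord \<phi>) * (1 - cos \<phi>) < g2 (R2 * chord \<phi>) * (1 - cos \<phi>)"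
    using less by simp
qed

lemma ring_balance_pos:
  assumes g: "continuous_on {0..} g" and R: "R > 0"
    and pos: "\<And>r. 0 \<le> r \<Longrightarrow> r < 2 * R \<Longrightarrow> g r > 0"
  shows "ring_balance g R > 0"
proof -
  have "ring_balance (\<lambda>_. 0) R < ring_balance g R"
    using R by (intro ring_balance_less[OF _ g] pos) auto
  then show ?thesis by (simp add: ring_balance_def)
qed

lemma ring_balance_strict_decreasing:
  assumes g: "continuous_on {0..} g"
    and dec: "\<And>r s. 0 \<le> r \<Longrightarrow> r < s \<Longrightarrow> s \<le> 2 * R2 \<Longrightarrow> g s < g r"
    and R: "0 < R1" "R1 < R2"
  shows "ring_balance g R2 < ring_balance g R1"
  using R by (intro ring_balance_less[OF g g] dec) auto

lemma ring_balance_zero_unique: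
  assumes g: "continuous_on {0..} g"
    and dec: "\<And>r s. 0 \<le> r \<Longrightarrow> r < s \<Longrightarrow> s \<le> 2 * M \<Longrightarrow> g s < g r"
    and R: "R1 \<in> {0<..M}" "R2 \<in> {0<..M}" and zero: "ring_balance g R1 = 0" "ring_balance g R2 = 0"
  shows "R1 = R2"
proof (rule ccontr)
  have mono: "ring_balance g R' < ring_balance g R" if "R \<in> {0<..M}" "R' \<in> {0<..M}" "R < R'" for R R'
    using that dec by (intro ring_balance_strict_decreasing[OF g]) auto
  assume "R1 \<noteq> R2"
  then show False
    using mono[OF R] mono[OF R(2,1)] zero by (cases "R1 < R2") auto
qed

lemma ring_balance_zero_exists:
  assumes g: "continuous_on {0..} g" and ab: "0 < a" "a < b"
    and pos: "\<And>r. 0 \<le> r \<Longrightarrow> r < 2 * a \<Longrightarrow> g r > 0" and neg: "ring_balance g b < 0"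
  shows "\<exists>R. a < R \<and> R \<le> b \<and> ring_balance g R = 0"
proof -
  have "ring_balance g a > 0"
    using ab pos by (intro ring_balance_pos[OF g]) auto
  moreover have "continuous_on {a..b} (ring_balance g)"
    using ab by (intro continuous_on_ring_balance[OF g]) simp
  ultimately obtain R where "a \<le> R" "R \<le> b" "ring_balance g R = 0"
    using IVT2'[of "ring_balance g" b 0 a] ab neg by auto
  with \<open>ring_balance g a > 0\<close> show ?thesis
    by (auto simp: order_le_less)
qed

lemma smooth_on_real_imp_continuous_on: "smooth_on_real S f \<Longrightarrow> continuous_on S f"
  unfolding smooth_on_real_def continuous_on_eq_continuous_within
  by (metis DERIV_continuous)

lemma Fint_1: "Fint fA fR 1 = (\<lambda>d. (fA (norm d) + fR (norm d)) *\<^sub>R d)"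
  by (simp add: fun_eq_iff Fint_def Tmat_def scaleR_add_left)

theorem proposition3p5:
  fixes fA fR :: "real \<Rightarrow> real" and da de :: real
  assumes smooth_A: "smooth_on_real {0..} fA"
    and smooth_R: "smooth_on_real {0..} fR"
    and int_A: "set_integrable lborel {0..} fA"
    and int_R: "set_integrable lborel {0..} fR"
    and fR_nonneg: "\<forall>r\<ge>0. fR r \<ge> 0"
    and fA_nonpos: "\<forall>r\<ge>0. fA r \<le> 0"
    and da_pos: "da > 0"
    and sign_far: "\<forall>r>da. fA r + fR r \<le> 0"
    and sign_near: "\<forall>r. 0 \<le> r \<and> r < da \<longrightarrow> fA r + fR r > 0"
    and F_C1: "\<forall>chi\<in>{0..1}. \<exists>F' :: real \<times> real \<Rightarrow> ((real \<times> real) \<Rightarrow>\<^sub>L (real \<times> real)).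
                 (\<forall>d. (Fint fA fR chi has_derivative blinfun_apply (F' d)) (at d)) \<and>
                 continuous_on UNIV F' \<and> (\<exists>B. \<forall>d. norm (F' d) \<le> B)"
    and de_gt: "de > da"
    and decr: "\<forall>chi\<in>{0..1}. \<forall>r s. 0 \<le> r \<and> r < s \<and> s \<le> de \<longrightarrow>
                 chi * fA s + fR s < chi * fA r + fR r"
  shows "(\<forall>R1 R2. R1 \<in> {0<..de/2} \<and> R2 \<in> {0<..de/2} \<and>
            equilibrium_state (Fint fA fR 1) (ring_state R1) \<and>
            equilibrium_state (Fint fA fR 1) (ring_state R2) \<longrightarrow> R1 = R2)
       \<and> (integral {0..pi} (\<lambda>\<phi>. (let r = de / 2 * sqrt ((1 - cos \<phi>)\<^sup>2 + (sin \<phi>)\<^sup>2) in fA r + fR r)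
              * (1 - cos \<phi>)) < 0
          \<longrightarrow> (\<exists>!R. R \<in> {da/2<..de/2} \<and> equilibrium_state (Fint fA fR 1) (ring_state R)))"
proof -
  \<comment> \<open>Only continuity of \<open>fA + fR\<close>, its positivity on \<open>[0, da)\<close> and the case \<open>chi = 1\<close> of
     \<open>decr\<close> are used.\<close>
  define g where "g r = fA r + fR r" for r
  have g: "continuous_on {0..} g"
    unfolding g_def using smooth_A smooth_R
    by (intro continuous_intros smooth_on_real_imp_continuous_on)
  have equilibrium_iff: "equilibrium_state (Fint fA fR 1) (ring_state R) \<longleftrightarrow> ring_balance g R = 0"
    if "R > 0" for R
    unfolding Fint_1 g_def[symmetric] using g that by (rule equilibrium_radial_ring_state_iff)
  have dec: "g s < g r" if "0 \<le> r" "r < s" "s \<le> 2 * (de/2)" for r s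
    using decr[rule_format, of 1 r s] that unfolding g_def by simp
  have pos: "g r > 0" if "0 \<le> r" "r < 2 * (da/2)" for r
    using sign_near that unfolding g_def by simp
  have unique: "R1 = R2" if "R1 \<in> {0<..de/2}" "R2 \<in> {0<..de/2}"
    "equilibrium_state (Fint fA fR 1) (ring_state R1)" "equilibrium_state (Fint fA fR 1) (ring_state R2)"
    for R1 R2
    using ring_balance_zero_unique[OF g dec that(1,2)] that equilibrium_iff by simp
  show ?thesis
  proof (intro conjI allI impI)
    fix R1 R2
    assume "R1 \<in> {0<..de/2} \<and> R2 \<in> {0<..de/2} \<and>
      equilibrium_state (Fint fA fR 1) (ring_state R1) \<and> equilibrium_state (Fint fA fR 1) (ring_state R2)"
    then show "R1 = R2" using unique by blast
  next
    assume "integral {0..pi} (\<lambda>\<phi>. (let r = de / 2 * sqrt ((1 - cos \<phi>)\<^sup>2 + (sin \<phi>)\<^sup>2) in fA r + fR r)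
              * (1 - cos \<phi>)) < 0"
    then have "ring_balance g (de/2) < 0"
      unfolding ring_balance_def g_def chord_def Let_def .
    then have "\<exists>R. da/2 < R \<and> R \<le> de/2 \<and> ring_balance g R = 0"
      using da_pos de_gt by (intro ring_balance_zero_exists[OF g _ _ pos]) simp_all
    then obtain R where R: "da/2 < R" "R \<le> de/2" "ring_balance g R = 0" by blast
    show "\<exists>!R. R \<in> {da/2<..de/2} \<and> equilibrium_state (Fint fA fR 1) (ring_state R)"
    proof (rule ex1I[of _ R])
      show "R \<in> {da/2<..de/2} \<and> equilibrium_state (Fint fA fR 1) (ring_state R)"
        using R da_pos equilibrium_iff by simp
      fix R' assume "R' \<in> {da/2<..de/2} \<and> equilibrium_state (Fint fA fR 1) (ring_state R')"
      then show "R' = R" using R da_pos unique[of R' R] equilibrium_iff by simp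
    qed
  qed
qed

end
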